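(* For the Adaptive-Threshold Dealer, let $\tau$ be a stage and $b$ a possible value of $\mathbf B^\tau$. Conditioned on $\mathbf B^\tau=b$, at every turn $t$ of stage $\tau+1$ (within the Adaptive phase), the number of mini-decks $i$ with $1\le x_{i,t}\le 4\ln(b)/\epsilon$ is at least $$\frac{\epsilon}{8}\cdot\frac{d}{\ln b}.$$
   Context: Adaptive-Threshold Dealer with $d$ mini-decks on $n$ cards ($d\mid n$): the deck is split into $d$ mini-decks, each a fixed ordered stack of $n/d$ cards. Let $L_{i,t}$ be the number of cards drawn from mini-deck $i$ before turn $t$. Adaptive phase (turns $t=1,\dots,n-2d$): repeatedly sample $i\in[d]$ uniformly until $L_{i,t}<\lceil t/d\rceil+1$, then draw the top card of mini-deck $i$. Holes at turn $t$: $x_{i,t}=\lceil t/d\rceil+1-L_{i,t}$. Stage $\tau\ge1$ consists of turns $(\tau-1)d+1,\dots,\tau d$. $\mathbf X_i^\tau=\tau+2-\mathbf L_i^\tau$, where $\mathbf L_i^\tau$ is the number of cards drawn from mini-deck $i$ in turns $1,\dots,\tau d$; $\mathbf X^0=(2,\dots,2)$. With $\epsilon=1/200$, $\Phi(x)=\sum_{i=1}^d(1+\epsilon)^{x_i}$ and $\mathbf B^\tau=\max\{\Phi(\mathbf X^\tau)/d,\ 16/\epsilon^2\}$. *)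

theory Defs
  imports Complex_Main
begin

text \<open>Mini-decks are indexed by 0..d-1.
A run (history) of the dealer is described by a choice function c: c s is the mini-deck
from which the card at turn s (s >= 1) is drawn.\<close>

definition atd_eps :: real where "atd_eps = 1/200"

definition atd_thr :: "nat \<Rightarrow> nat \<Rightarrow> nat" where
  "atd_thr d t = nat \<lceil>real t / real d\<rceil> + 1"

definition atd_L :: "(nat \<Rightarrow> nat) \<Rightarrow> nat \<Rightarrow> nat \<Rightarrow> nat" where
  "atd_L c i t = card {s. 1 \<le> s \<and> s < t \<and> c s = i}"

definition atd_x :: "nat \<Rightarrow> (nat \<Rightarrow> nat) \<Rightarrow> nat \<Rightarrow> nat \<Rightarrow> int" where
  "atd_x d c i t = int (atd_thr d t) - int (atd_L c i t)"

text \<open>A history c is a possible run of the adaptive phase for all turns s < t: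
at each such turn the drawn mini-deck is a valid index and lies below the threshold
(these are exactly the choices made with positive probability by the rejection sampling).\<close>
definition atd_valid :: "nat \<Rightarrow> (nat \<Rightarrow> nat) \<Rightarrow> nat \<Rightarrow> bool" where
  "atd_valid d c t \<longleftrightarrow> (\<forall>s. 1 \<le> s \<and> s < t \<longrightarrow> c s < d \<and> atd_L c (c s) s < atd_thr d s)"

definition atd_X :: "nat \<Rightarrow> (nat \<Rightarrow> nat) \<Rightarrow> nat \<Rightarrow> nat \<Rightarrow> int" where
  "atd_X d c tau i = int tau + 2 - int (atd_L c i (tau * d + 1))"

definition atd_Phi :: "nat \<Rightarrow> (nat \<Rightarrow> int) \<Rightarrow> real" where
  "atd_Phi d x = (\<Sum>i<d. (1 + atd_eps) powr (real_of_int (x i)))"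

definition atd_B :: "nat \<Rightarrow> (nat \<Rightarrow> nat) \<Rightarrow> nat \<Rightarrow> real" where
  "atd_B d c tau = max (atd_Phi d (atd_X d c tau) / real d) (16 / atd_eps ^ 2)"

end

theory Submission
  imports Defs
begin

text \<open>At a turn t of stage \<tau>+1 the threshold is \<tau>+2 and only t - 1 \<le> (\<tau>+1)d - 1
cards have been drawn, so the holes sum to more than d. On the other hand holes only shrink
from the end of stage \<tau> on, so the potential of the holes at turn t is at most
\<Phi>(X^\<tau>) \<le> bd. A mini-deck with more than K = 4 ln b/\<epsilon> holes has (1+\<epsilon>)-power so large that
its number of holes is at most that power divided by 2b; hence such mini-decks contribute
at most d/2 to the sum of holes, and the mini-decks with between 1 and K holes must
contribute at least d/2, i.e. there are at least d/(2K) of them.\<close>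

lemma ln_640000_le: "ln (640000::real) \<le> 14"
proof -
  have "(640000::real) \<le> (196/100)^20"
    by (simp add: power_numeral_reduce)
  also have "\<dots> \<le> ((1 + 14/200)^10)^20"
    by (rule power_mono) (simp_all add: power_numeral_reduce)
  also have "\<dots> = (1 + 14/200)^200"
    by (simp flip: power_mult)
  also have "\<dots> \<le> exp (14/200) ^ 200"
    by (intro power_mono) (use exp_ge_add_one_self[of "14/200::real"] in auto)
  also have "\<dots> = exp 14"
    using exp_of_nat_mult[of 200 "14/200::real"] by simp
  finally show ?thesis
    by (metis ln_exp ln_le_cancel_iff exp_gt_zero zero_less_numeral)
qed

text \<open>The constants are 640000 = 16/\<epsilon>^2, the lower bound built into B, and 1600 = 8/\<epsilon>.\<close>
lemma mult_ln_le_self: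
  fixes b :: real
  assumes "640000 \<le> b"
  shows "1600 * ln b \<le> b"
proof -
  have "ln (b/640000) \<le> b/640000 - 1"
    using assms by (intro ln_le_minus_one) auto
  moreover have "ln (b/640000) = ln b - ln 640000"
    using assms by (simp add: ln_div)
  ultimately have "ln b \<le> b/640000 + 13"
    using ln_640000_le by linarith
  thus ?thesis
    using assms by linarith
qed

lemma half_atd_eps_le_ln: "atd_eps / 2 \<le> ln (1 + atd_eps)"
  using ln_one_plus_pos_lower_bound[of atd_eps]
  by (simp add: atd_eps_def power2_eq_square)

text \<open>Writing (1+\<epsilon>)^v = e^y e^y with y \<ge> ln b, one factor e^y absorbs v and the
other absorbs 2b.\<close>
lemma le_powr_atd_eps_div:
  fixes b v :: real
  assumes b: "640000 \<le> b" and v: "4 * ln b / atd_eps < v"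
  shows "v \<le> (1 + atd_eps) powr v / (2 * b)"
proof -
  define y where "y = v * ln (1 + atd_eps) / 2"
  have lnb: "0 < ln b"
    using b by simp
  have v_pos: "0 < v"
    using v lnb by (simp add: atd_eps_def)
  have "v * (atd_eps / 2) \<le> v * ln (1 + atd_eps)"
    using half_atd_eps_le_ln v_pos by (intro mult_left_mono) auto
  hence v_le: "v \<le> 800 * y" and y_ge: "ln b \<le> y"
    using v by (simp_all add: y_def atd_eps_def field_simps)
  have exp_y: "b \<le> exp y"
    using y_ge b by (metis exp_le_cancel_iff exp_ln less_le_trans zero_less_numeral)
  have "1600 * y \<le> exp y"
    using mult_ln_le_self[of "exp y"] exp_y b by simp
  hence "v \<le> exp y / 2"
    using v_le by linarith
  also have "\<dots> \<le> exp y * exp y / (2 * b)"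
    using exp_y b by (simp add: field_simps)
  also have "exp y * exp y = (1 + atd_eps) powr v"
    by (simp add: powr_def y_def atd_eps_def flip: exp_add)
  finally show ?thesis .
qed

lemma of_int_le_moderate_plus_powr:
  fixes b :: real and v :: int
  assumes b: "640000 \<le> b"
  defines "K \<equiv> 4 * ln b / atd_eps"
  shows "real_of_int v \<le> (if 1 \<le> v \<and> real_of_int v \<le> K then K else 0)
                           + (1 + atd_eps) powr real_of_int v / (2 * b)"
proof -
  have "0 \<le> (1 + atd_eps) powr real_of_int v / (2 * b)"
    using b by simp
  moreover have "0 < K"
    using b by (simp add: K_def atd_eps_def)
  ultimately show ?thesis
    using le_powr_atd_eps_div[OF b, of "real_of_int v"] unfolding K_def[symmetric]
    by (cases "v \<le> 0") auto
qed

lemma atd_thr_stage: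
  assumes "tau * d + 1 \<le> t" and "t \<le> (tau + 1) * d"
  shows "atd_thr d t = tau + 2"
proof -
  have d: "0 < real d"
    using assms by (cases d) auto
  have "real (tau * d) < real t" and "real t \<le> real ((tau + 1) * d)"
    using assms by (simp_all only: of_nat_less_iff of_nat_le_iff)
  hence "real tau * real d < real t" and "real t \<le> (real tau + 1) * real d"
    by (simp_all add: algebra_simps)
  hence "real tau < real t / real d" and "real t / real d \<le> real tau + 1"
    using d by (simp_all add: field_simps)
  hence "\<lceil>real t / real d\<rceil> = int tau + 1"
    by (intro ceiling_unique) auto
  thus ?thesis
    by (simp add: atd_thr_def)
qed

lemma atd_L_mono: "s \<le> t \<Longrightarrow> atd_L c i s \<le> atd_L c i t"
  unfolding atd_L_def by (rule card_mono) auto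

lemma sum_atd_L:
  assumes "atd_valid d c t"
  shows "(\<Sum>i<d. atd_L c i t) = t - 1"
proof -
  have "(\<Sum>i<d. atd_L c i t) = card (\<Union>i<d. {s. 1 \<le> s \<and> s < t \<and> c s = i})"
    unfolding atd_L_def by (rule card_UN_disjoint[symmetric]) auto
  also have "(\<Union>i<d. {s. 1 \<le> s \<and> s < t \<and> c s = i}) = {1..<t}"
    using assms by (auto simp: atd_valid_def)
  finally show ?thesis
    by simp
qed

lemma sum_atd_x_ge:
  assumes "tau * d + 1 \<le> t" and "t \<le> (tau + 1) * d" and "atd_valid d c t"
  shows "real d \<le> (\<Sum>i<d. real_of_int (atd_x d c i t))"
proof -
  have "(\<Sum>i<d. atd_x d c i t) = int d * int (tau + 2) - int (\<Sum>i<d. atd_L c i t)"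
    by (simp add: atd_x_def atd_thr_stage[OF assms(1,2)] sum_subtractf)
  also have "\<dots> = int d * int (tau + 2) - int (t - 1)"
    by (simp add: sum_atd_L[OF assms(3)])
  finally have "int d \<le> (\<Sum>i<d. atd_x d c i t)"
    using assms(1,2) by (simp add: algebra_simps of_nat_diff flip: of_nat_mult of_nat_add)
  thus ?thesis
    by (metis of_int_of_nat_eq of_int_le_iff of_int_sum)
qed

lemma atd_x_le_X:
  assumes "tau * d + 1 \<le> t" and "t \<le> (tau + 1) * d"
  shows "atd_x d c i t \<le> atd_X d c tau i"
  using atd_L_mono[OF assms(1), of c i]
  by (simp add: atd_x_def atd_X_def atd_thr_stage[OF assms])

lemma atd_B_ge: "640000 \<le> atd_B d c tau"
  unfolding atd_B_def by (simp add: atd_eps_def power2_eq_square)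

lemma sum_powr_atd_x_le:
  assumes "1 \<le> d" and "tau * d + 1 \<le> t" and "t \<le> (tau + 1) * d"
  shows "(\<Sum>i<d. (1 + atd_eps) powr real_of_int (atd_x d c i t)) \<le> atd_B d c tau * real d"
proof -
  have "(\<Sum>i<d. (1 + atd_eps) powr real_of_int (atd_x d c i t)) \<le> atd_Phi d (atd_X d c tau)"
    unfolding atd_Phi_def
    by (intro sum_mono powr_mono) (simp_all add: atd_x_le_X[OF assms(2,3)] atd_eps_def)
  also have "\<dots> = atd_Phi d (atd_X d c tau) / real d * real d"
    using assms(1) by simp
  also have "\<dots> \<le> atd_B d c tau * real d"
    unfolding atd_B_def by (intro mult_right_mono) simp_all
  finally show ?thesis .
qed

theorem claim3p10:
  fixes n d tau t :: nat and c :: "nat \<Rightarrow> nat" and b :: real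
  assumes "d \<ge> 1" and "d dvd n"
    and "tau * d + 1 \<le> t" and "t \<le> (tau + 1) * d"
    and "1 \<le> t" and "t + 2 * d \<le> n"
    and "atd_valid d c t"
    and "atd_B d c tau = b"
  shows "real (card {i \<in> {..<d}. 1 \<le> atd_x d c i t \<and> real_of_int (atd_x d c i t) \<le> 4 * ln b / atd_eps})
           \<ge> atd_eps / 8 * (real d / ln b)"
proof -
  \<comment> \<open>Only the stage bounds on t, validity of the run and the value of B are needed.\<close>
  define K where "K = 4 * ln b / atd_eps"
  define x where "x i = atd_x d c i t" for i
  define M where "M = {i \<in> {..<d}. 1 \<le> x i \<and> real_of_int (x i) \<le> K}"
  have b: "640000 \<le> b"
    using atd_B_ge assms(8) by metis
  have "real d \<le> (\<Sum>i<d. real_of_int (x i))"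
    unfolding x_def using sum_atd_x_ge assms(3,4,7) .
  also have "\<dots> \<le> (\<Sum>i<d. (if i \<in> M then K else 0) + (1 + atd_eps) powr real_of_int (x i) / (2 * b))"
  proof (rule sum_mono)
    fix i assume "i \<in> {..<d}"
    then show "real_of_int (x i) \<le> (if i \<in> M then K else 0) + (1 + atd_eps) powr real_of_int (x i) / (2 * b)"
      using of_int_le_moderate_plus_powr[OF b, of "x i"] by (simp add: M_def K_def split: if_split_asm)
  qed
  also have "\<dots> = K * real (card M) + (\<Sum>i<d. (1 + atd_eps) powr real_of_int (x i)) / (2 * b)"
    by (simp add: sum.distrib sum_divide_distrib sum.If_cases M_def Int_def conj_commute)
  also have "\<dots> \<le> K * real (card M) + real d / 2"
    using sum_powr_atd_x_le[OF assms(1,3,4), of c] assms(8) b by (simp add: x_def field_simps)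
  finally have "real d / (2 * K) \<le> real (card M)"
    using b by (simp add: K_def atd_eps_def field_simps)
  thus ?thesis
    using b by (simp add: M_def x_def K_def atd_eps_def field_simps)
qed

end
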